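(* Let $h>0$ and let $(\tau,\mu):\mathbb R\to\mathbb R^2$ be any solution of the system $\tau'=1+K(\tau,\mu)\mu$, $\mu'=-K(\tau,\mu)\tau$. Then $\tau$ has exactly one zero $s_0$, with $\tau<0$ on $(-\infty,s_0)$ and $\tau>0$ on $(s_0,+\infty)$. Consequently $r^2=\tau^2+\mu^2$ attains a global minimum (at $s_0$, its only critical point) and $r^2(s)\to+\infty$ as $s\to\pm\infty$.
   Context: Fix $h>0$. For $(\tau,\mu)\in\mathbb R^2$ put $r^2=\tau^2+\mu^2$ and define $K:\mathbb R^2\to\mathbb R$ by $$K(\tau,\mu)=\frac{2\big(\tau^2+h^2(1+\mu^2)\big)\tau+(h^2-1)(1+\mu^2)\mu}{(1+r^2)(h^2+r^2)}.$$ Consider the autonomous ODE system $\tau'=1+K(\tau,\mu)\mu$, $\mu'=-K(\tau,\mu)\tau$ for functions $s\mapsto(\tau(s),\mu(s))$; all its solutions are defined on $\mathbb R$. *)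

theory Defs
  imports "HOL-Analysis.Analysis"
begin

definition Kfun :: "real \<Rightarrow> real \<Rightarrow> real \<Rightarrow> real" where
  "Kfun h \<tau> \<mu> =
     (2 * (\<tau>^2 + h^2 * (1 + \<mu>^2)) * \<tau> + (h^2 - 1) * (1 + \<mu>^2) * \<mu>)
     / ((1 + (\<tau>^2 + \<mu>^2)) * (h^2 + (\<tau>^2 + \<mu>^2)))"

end

theory Submission
  imports Defs
begin

text \<open>Along a solution \<open>(r\<^sup>2)' = 2\<tau>\<close>, and on the axis \<open>\<tau> = 0\<close> one has
  \<open>\<tau>' = h\<^sup>2(1 + \<mu>\<^sup>2)/(h\<^sup>2 + \<mu>\<^sup>2) > 0\<close>, so \<open>\<tau>\<close> crosses zero only upwards and has at most one zero.
  On bounded sets \<open>\<tau>'\<close> stays positive in a strip \<open>|\<tau>| \<le> \<delta>\<close>; hence \<open>r\<^sup>2\<close> cannot stay bounded on a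
  ray, since \<open>\<tau>\<close> would either stay below \<open>-\<delta>\<close> or pass the strip, and either way \<open>r\<^sup>2\<close> changes
  at least linearly. So \<open>\<tau>\<close> cannot stay negative (then \<open>r\<^sup>2\<close> would decrease), it has a zero, and after
  it \<open>r\<^sup>2\<close> increases to infinity. The system is invariant under \<open>(\<tau>, \<mu>)(s) \<mapsto> -(\<tau>, \<mu>)(-s)\<close>,
  which transfers everything to \<open>s \<rightarrow> -\<infinity>\<close>.\<close>

lemma linear_lower_bound_of_deriv_ge:
  fixes f f' :: "real \<Rightarrow> real"
  assumes deriv: "\<And>x. (f has_real_derivative f' x) (at x)" and "a \<le> b"
    and ge: "\<And>x. a \<le> x \<Longrightarrow> x \<le> b \<Longrightarrow> c \<le> f' x"
  shows "f a + c * (b - a) \<le> f b"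
proof -
  have "(\<lambda>x. f x - c * x) a \<le> (\<lambda>x. f x - c * x) b"
    by (rule deriv_nonneg_imp_mono[where g'="\<lambda>x. f' x - c"])
       (use deriv ge \<open>a \<le> b\<close> in \<open>auto intro!: derivative_eq_intros\<close>)
  then show ?thesis by (simp add: algebra_simps)
qed

lemma linear_upper_bound_of_deriv_le:
  fixes f f' :: "real \<Rightarrow> real"
  assumes deriv: "\<And>x. (f has_real_derivative f' x) (at x)" and "a \<le> b"
    and le: "\<And>x. a \<le> x \<Longrightarrow> x \<le> b \<Longrightarrow> f' x \<le> c"
  shows "f b \<le> f a + c * (b - a)"
proof -
  have "(\<lambda>x. - f x) a + (- c) * (b - a) \<le> (\<lambda>x. - f x) b"
    by (rule linear_lower_bound_of_deriv_ge[where f'="\<lambda>x. - f' x"])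
       (use deriv le \<open>a \<le> b\<close> in \<open>auto intro!: derivative_eq_intros\<close>)
  then show ?thesis by (simp add: algebra_simps)
qed

lemma global_min_if_deriv_changes_sign:
  fixes f f' :: "real \<Rightarrow> real"
  assumes deriv: "\<And>x. (f has_real_derivative f' x) (at x)"
    and "\<And>x. x \<le> s0 \<Longrightarrow> f' x \<le> 0" and "\<And>x. s0 \<le> x \<Longrightarrow> 0 \<le> f' x"
  shows "f s0 \<le> f s"
proof (cases "s0 \<le> s")
  case True
  then show ?thesis using linear_lower_bound_of_deriv_ge[OF deriv True, of 0] assms(3) by simp
next
  case False
  hence "s \<le> s0" by simp
  then show ?thesis using linear_upper_bound_of_deriv_le[OF deriv \<open>s \<le> s0\<close>, of 0] assms(2) by simp
qed

lemma exceeds_bound_if_deriv_ge_pos: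
  fixes f f' :: "real \<Rightarrow> real"
  assumes deriv: "\<And>x. (f has_real_derivative f' x) (at x)"
    and "0 < \<epsilon>" and ge: "\<And>x. a \<le> x \<Longrightarrow> \<epsilon> \<le> f' x"
  shows "\<exists>s\<ge>a. B < f s"
proof -
  define T where "T = (\<bar>B\<bar> + \<bar>f a\<bar>) / \<epsilon> + 1"
  have "0 \<le> T" using \<open>0 < \<epsilon>\<close> by (simp add: T_def)
  hence "f a + \<epsilon> * (a + T - a) \<le> f (a + T)"
    by (intro linear_lower_bound_of_deriv_ge[OF deriv] ge) auto
  moreover have "\<epsilon> * (a + T - a) = \<bar>B\<bar> + \<bar>f a\<bar> + \<epsilon>"
    using \<open>0 < \<epsilon>\<close> by (simp add: T_def field_simps)
  ultimately have "B < f (a + T)" using \<open>0 < \<epsilon>\<close> by linarith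
  then show ?thesis using \<open>0 \<le> T\<close> by (intro exI[of _ "a + T"]) auto
qed

text \<open>At the first return to level \<open>v\<close> the function would be approached from above.\<close>

lemma stays_above_level_if_deriv_pos_at_level_strict:
  fixes f f' :: "real \<Rightarrow> real"
  assumes deriv: "\<And>x. (f has_real_derivative f' x) (at x)"
    and pos: "\<And>x. a \<le> x \<Longrightarrow> f x = v \<Longrightarrow> 0 < f' x"
    and "v < f a" and "a \<le> t"
  shows "v < f t"
proof (rule ccontr)
  assume "\<not> v < f t"
  have cont: "\<And>x. isCont f x" using deriv DERIV_isCont by blast
  define S where "S = {a..t} \<inter> {x. f x \<le> v}"
  have "closed S" unfolding S_def
    by (intro closed_Int closed_atLeastAtMost closed_Collect_le continuous_intros)
       (simp add: continuous_at_imp_continuous_on cont)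
  moreover have "t \<in> S" using \<open>\<not> v < f t\<close> \<open>a \<le> t\<close> by (auto simp: S_def)
  moreover have bdd: "bdd_below S" unfolding S_def by (rule bdd_belowI[of _ a]) auto
  ultimately have "Inf S \<in> S" using closed_contains_Inf by blast
  define m where "m = Inf S"
  have least: "\<And>x. x \<in> S \<Longrightarrow> m \<le> x" unfolding m_def using bdd by (simp add: cInf_lower)
  have m: "a < m" "m \<le> t" "f m \<le> v"
    using \<open>Inf S \<in> S\<close> \<open>v < f a\<close> by (auto simp: S_def m_def dual_order.order_iff_strict)
  have "f m = v"
  proof (rule ccontr)
    assume "f m \<noteq> v"
    then obtain x where "a \<le> x" "x \<le> m" "f x = v"
      using IVT2[of f m v a] \<open>v < f a\<close> m cont by auto
    moreover from this have "m \<le> x" using m by (intro least) (auto simp: S_def)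
    ultimately show False using \<open>f m \<noteq> v\<close> by auto
  qed
  hence "0 < f' m" using pos m by simp
  then obtain e where e: "0 < e" "\<And>h. 0 < h \<Longrightarrow> h < e \<Longrightarrow> f (m - h) < f m"
    using DERIV_pos_inc_left[OF deriv] by blast
  define h where "h = min e (m - a) / 2"
  have "0 < h" "h < e" "h < m - a" using e m by (auto simp: h_def)
  hence "m - h \<in> S" using e(2)[of h] \<open>f m = v\<close> m by (auto simp: S_def)
  hence "m \<le> m - h" by (rule least)
  then show False using \<open>0 < h\<close> by simp
qed

lemma stays_above_level_if_deriv_pos_at_level:
  fixes f f' :: "real \<Rightarrow> real"
  assumes deriv: "\<And>x. (f has_real_derivative f' x) (at x)"
    and pos: "\<And>x. a \<le> x \<Longrightarrow> f x = v \<Longrightarrow> 0 < f' x"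
    and "v \<le> f a" and "a < t"
  shows "v < f t"
proof (cases "v < f a")
  case True
  then show ?thesis
    using stays_above_level_if_deriv_pos_at_level_strict[OF deriv pos] \<open>a < t\<close> by simp
next
  case False
  hence "f a = v" using \<open>v \<le> f a\<close> by simp
  then obtain e where e: "0 < e" "\<And>h. 0 < h \<Longrightarrow> h < e \<Longrightarrow> f a < f (a + h)"
    using DERIV_pos_inc_right[OF deriv pos[OF order_refl]] by blast
  define h where "h = min e (t - a) / 2"
  have "0 < h" "h < e" "h < t - a" using e \<open>a < t\<close> by (auto simp: h_def)
  then show ?thesis
    using stays_above_level_if_deriv_pos_at_level_strict[OF deriv, of "a + h" v t] pos e(2)[of h]
      \<open>f a = v\<close>
    by simp
qed

lemma passes_strip_if_deriv_ge_on_strip: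
  fixes f f' :: "real \<Rightarrow> real"
  assumes deriv: "\<And>x. (f has_real_derivative f' x) (at x)"
    and "0 < c" "0 \<le> \<delta>"
    and ge: "\<And>x. a \<le> x \<Longrightarrow> \<bar>f x\<bar> \<le> \<delta> \<Longrightarrow> c \<le> f' x"
    and "- \<delta> \<le> f a" and "a + 2 * \<delta> / c \<le> t"
  shows "\<delta> \<le> f t"
proof -
  have pos: "\<And>x. a \<le> x \<Longrightarrow> f x = - \<delta> \<or> f x = \<delta> \<Longrightarrow> 0 < f' x"
    using ge \<open>0 < c\<close> \<open>0 \<le> \<delta>\<close> by fastforce
  have above: "- \<delta> \<le> f x" if "a \<le> x" for x
    using stays_above_level_if_deriv_pos_at_level[OF deriv, of a "- \<delta>" x] pos \<open>- \<delta> \<le> f a\<close> that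
    by (cases "x = a") auto
  define T where "T = a + 2 * \<delta> / c"
  have "a \<le> T" using \<open>0 < c\<close> \<open>0 \<le> \<delta>\<close> by (simp add: T_def)
  have "\<delta> \<le> f T"
  proof (rule ccontr)
    assume "\<not> \<delta> \<le> f T"
    have below: "f x \<le> \<delta>" if "a \<le> x" "x \<le> T" for x
      using stays_above_level_if_deriv_pos_at_level[OF deriv, of x \<delta> T] pos that \<open>\<not> \<delta> \<le> f T\<close>
      by (cases "x = T") force+
    have "\<bar>f x\<bar> \<le> \<delta>" if "a \<le> x" "x \<le> T" for x
      using above[of x] below[of x] that by (simp add: abs_le_iff)
    hence "f a + c * (T - a) \<le> f T"
      by (intro linear_lower_bound_of_deriv_ge[OF deriv \<open>a \<le> T\<close>] ge)
    moreover have "c * (T - a) = 2 * \<delta>" using \<open>0 < c\<close> by (simp add: T_def)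
    ultimately show False using \<open>- \<delta> \<le> f a\<close> \<open>\<not> \<delta> \<le> f T\<close> by linarith
  qed
  moreover have "\<delta> < f t" if "T < t"
    using stays_above_level_if_deriv_pos_at_level[OF deriv, of T \<delta> t] pos \<open>a \<le> T\<close> \<open>\<delta> \<le> f T\<close> that
    by simp
  ultimately show ?thesis using \<open>a + 2 * \<delta> / c \<le> t\<close> unfolding T_def by fastforce
qed

lemma Kfun_uminus: "Kfun h (- a) (- b) = - Kfun h a b"
  unfolding Kfun_def by (simp add: algebra_simps minus_divide_left)

lemma tau_speed_on_axis:
  assumes "h \<noteq> 0"
  shows "1 + Kfun h 0 b * b = h^2 * (1 + b^2) / (h^2 + b^2)"
proof -
  have "0 < h^2 + b^2" "0 < 1 + b^2" using assms by (auto intro: add_pos_nonneg)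
  hence "Kfun h 0 b = (h^2 - 1) * b / (h^2 + b^2)" unfolding Kfun_def by simp
  hence "1 + Kfun h 0 b * b = 1 + (h^2 - 1) * b / (h^2 + b^2) * b" by simp
  also have "\<dots> = h^2 * (1 + b^2) / (h^2 + b^2)"
  proof -
    have "h^2 + b^2 \<noteq> 0" using \<open>0 < h^2 + b^2\<close> by linarith
    then show ?thesis by (simp add: field_simps) (simp add: algebra_simps power2_eq_square)
  qed
  finally show ?thesis .
qed

lemma tau_speed_on_axis_ge:
  assumes "h \<noteq> 0"
  shows "min 1 (h^2) \<le> 1 + Kfun h 0 b * b"
proof -
  have pos: "0 < h^2 + b^2" using assms by (simp add: add_pos_nonneg)
  have "min 1 (h^2) * h^2 \<le> h^2" "min 1 (h^2) * b^2 \<le> h^2 * b^2"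
    using mult_right_mono[of "min 1 (h^2)" 1 "h^2"] mult_right_mono[of "min 1 (h^2)" "h^2" "b^2"]
    by auto
  hence "min 1 (h^2) * (h^2 + b^2) \<le> h^2 * (1 + b^2)" by (simp add: algebra_simps)
  then show ?thesis using pos by (simp add: tau_speed_on_axis[OF assms] le_divide_eq)
qed

lemma continuous_tau_speed:
  assumes "h \<noteq> 0"
  shows "continuous_on UNIV (\<lambda>p::real \<times> real. 1 + Kfun h (fst p) (snd p) * snd p)"
proof -
  have "(1 + ((fst p)^2 + (snd p)^2)) * (h^2 + ((fst p)^2 + (snd p)^2)) \<noteq> 0" for p :: "real \<times> real"
    using assms by (auto simp: add_nonneg_eq_0_iff)
  then show ?thesis unfolding Kfun_def by (intro continuous_intros) auto
qed

text \<open>Compare with the value on the axis, using uniform continuity on a compact disc.\<close>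

lemma tau_speed_ge_near_axis:
  assumes "h \<noteq> 0"
  shows "\<exists>\<delta>>0. \<forall>a b. a^2 + b^2 \<le> B \<longrightarrow> \<bar>a\<bar> \<le> \<delta> \<longrightarrow> min 1 (h^2) / 2 \<le> 1 + Kfun h a b * b"
proof -
  define g where "g = (\<lambda>p::real \<times> real. 1 + Kfun h (fst p) (snd p) * snd p)"
  define D where "D = cball (0::real \<times> real) (sqrt (max B 0))"
  have "uniformly_continuous_on D g"
    unfolding D_def g_def
    by (rule compact_uniformly_continuous[OF continuous_on_subset[OF continuous_tau_speed[OF assms]]])
       auto
  moreover have "0 < min 1 (h^2) / 2" using assms by simp
  ultimately obtain d where d: "0 < d"
    "\<And>x x'. x \<in> D \<Longrightarrow> x' \<in> D \<Longrightarrow> dist x' x < d \<Longrightarrow> dist (g x') (g x) < min 1 (h^2) / 2"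
    unfolding uniformly_continuous_on_def by metis
  have "min 1 (h^2) / 2 \<le> g (a, b)" if "a^2 + b^2 \<le> B" "\<bar>a\<bar> \<le> d / 2" for a b
  proof -
    have "b^2 \<le> B" using that(1) zero_le_power2[of a] by linarith
    hence "a^2 + b^2 \<le> max B 0" "(0::real)^2 + b^2 \<le> max B 0" using that(1) by auto
    hence in_D: "(a, b) \<in> D" "(0, b) \<in> D"
      unfolding D_def mem_cball_0 norm_Pair by (auto simp flip: real_sqrt_abs intro: real_sqrt_le_mono)
    have "dist (a, b) (0, b) < d" using that d by (simp add: dist_Pair_Pair)
    hence "dist (g (a, b)) (g (0, b)) < min 1 (h^2) / 2" using d(2) in_D by blast
    moreover have "min 1 (h^2) \<le> g (0, b)" unfolding g_def using tau_speed_on_axis_ge[OF assms] by simp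
    ultimately show ?thesis by (simp only: dist_real_def abs_less_iff) linarith
  qed
  then show ?thesis using d(1) unfolding g_def by (intro exI[of _ "d / 2"]) auto
qed

definition K_solution :: "real \<Rightarrow> (real \<Rightarrow> real) \<Rightarrow> (real \<Rightarrow> real) \<Rightarrow> bool" where
  "K_solution h \<tau> \<mu> \<longleftrightarrow>
     (\<forall>s. (\<tau> has_real_derivative 1 + Kfun h (\<tau> s) (\<mu> s) * \<mu> s) (at s)) \<and>
     (\<forall>s. (\<mu> has_real_derivative - Kfun h (\<tau> s) (\<mu> s) * \<tau> s) (at s))"

lemma K_solution_tau_deriv:
  "K_solution h \<tau> \<mu> \<Longrightarrow> (\<tau> has_real_derivative 1 + Kfun h (\<tau> s) (\<mu> s) * \<mu> s) (at s)"
  unfolding K_solution_def by blast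

lemma K_solution_radius_sq_deriv:
  assumes "K_solution h \<tau> \<mu>"
  shows "((\<lambda>t. (\<tau> t)^2 + (\<mu> t)^2) has_real_derivative 2 * \<tau> s) (at s)"
proof -
  have "((\<lambda>t. (\<tau> t)^2 + (\<mu> t)^2) has_real_derivative
      2 * \<tau> s * (1 + Kfun h (\<tau> s) (\<mu> s) * \<mu> s) + 2 * \<mu> s * (- Kfun h (\<tau> s) (\<mu> s) * \<tau> s)) (at s)"
    using assms unfolding K_solution_def by (auto intro!: derivative_eq_intros)
  then show ?thesis by (simp add: algebra_simps)
qed

lemma K_solution_reflect:
  assumes "K_solution h \<tau> \<mu>"
  shows "K_solution h (\<lambda>s. - \<tau> (- s)) (\<lambda>s. - \<mu> (- s))"
  unfolding K_solution_def
proof (intro conjI allI)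
  fix s
  have "((\<lambda>s. - \<tau> (- s)) has_real_derivative
      - ((1 + Kfun h (\<tau> (- s)) (\<mu> (- s)) * \<mu> (- s)) * (- 1))) (at s)"
    using assms unfolding K_solution_def
    by (auto intro!: derivative_eq_intros DERIV_chain2[where f = \<tau>])
  then show "((\<lambda>s. - \<tau> (- s)) has_real_derivative
      1 + Kfun h (- \<tau> (- s)) (- \<mu> (- s)) * - \<mu> (- s)) (at s)"
    by (simp add: Kfun_uminus add.commute)
  have "((\<lambda>s. - \<mu> (- s)) has_real_derivative
      - ((- Kfun h (\<tau> (- s)) (\<mu> (- s)) * \<tau> (- s)) * (- 1))) (at s)"
    using assms unfolding K_solution_def
    by (auto intro!: derivative_eq_intros DERIV_chain2[where f = \<mu>])
  then show "((\<lambda>s. - \<mu> (- s)) has_real_derivative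
      - Kfun h (- \<tau> (- s)) (- \<mu> (- s)) * - \<tau> (- s)) (at s)"
    by (simp add: Kfun_uminus add.commute)
qed

lemma K_solution_tau_pos_after_zero:
  assumes S: "K_solution h \<tau> \<mu>" and "h \<noteq> 0" and "\<tau> a = 0" and "a < t"
  shows "0 < \<tau> t"
proof (rule stays_above_level_if_deriv_pos_at_level[OF K_solution_tau_deriv[OF S] _ _ \<open>a < t\<close>])
  fix x assume "\<tau> x = 0"
  hence "min 1 (h^2) \<le> 1 + Kfun h (\<tau> x) (\<mu> x) * \<mu> x"
    using tau_speed_on_axis_ge[OF \<open>h \<noteq> 0\<close>] by simp
  moreover have "0 < min 1 (h^2)" using \<open>h \<noteq> 0\<close> by simp
  ultimately show "0 < 1 + Kfun h (\<tau> x) (\<mu> x) * \<mu> x" by linarith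
qed (use \<open>\<tau> a = 0\<close> in simp)

lemma K_solution_radius_sq_unbounded:
  assumes S: "K_solution h \<tau> \<mu>" and "h \<noteq> 0"
  shows "\<exists>s\<ge>a. B < (\<tau> s)^2 + (\<mu> s)^2"
proof (rule ccontr)
  define \<rho> where "\<rho> = (\<lambda>t. (\<tau> t)^2 + (\<mu> t)^2)"
  assume "\<not> ?thesis"
  hence bounded: "\<And>s. a \<le> s \<Longrightarrow> \<rho> s \<le> B" unfolding \<rho>_def by force
  have \<rho>': "\<And>x. (\<rho> has_real_derivative 2 * \<tau> x) (at x)"
    unfolding \<rho>_def by (rule K_solution_radius_sq_deriv[OF S])
  obtain \<delta> where "0 < \<delta>"
    and near_axis: "\<And>x y. x^2 + y^2 \<le> B \<Longrightarrow> \<bar>x\<bar> \<le> \<delta> \<Longrightarrow> min 1 (h^2) / 2 \<le> 1 + Kfun h x y * y"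
    using tau_speed_ge_near_axis[OF \<open>h \<noteq> 0\<close>, of B] by blast
  define c where "c = min 1 (h^2) / 2"
  have "0 < c" using \<open>h \<noteq> 0\<close> by (simp add: c_def)
  have speed: "c \<le> 1 + Kfun h (\<tau> x) (\<mu> x) * \<mu> x" if "a \<le> x" "\<bar>\<tau> x\<bar> \<le> \<delta>" for x
    using near_axis bounded that unfolding c_def \<rho>_def by blast
  have "\<exists>s\<ge>a. - \<delta> \<le> \<tau> s"
  proof (rule ccontr)
    assume "\<not> ?thesis"
    hence "2 * \<delta> \<le> - 2 * \<tau> x" if "a \<le> x" for x using that by force
    then obtain s where "0 < - \<rho> s"
      using exceeds_bound_if_deriv_ge_pos[OF DERIV_minus[OF \<rho>'], of "2 * \<delta>" a 0] \<open>0 < \<delta>\<close> by auto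
    then show False unfolding \<rho>_def by (smt (verit) zero_le_power2)
  qed
  then obtain s2 where "a \<le> s2" "- \<delta> \<le> \<tau> s2" by blast
  define s3 where "s3 = s2 + 2 * \<delta> / c"
  have "s2 \<le> s3" using \<open>0 < c\<close> \<open>0 < \<delta>\<close> by (simp add: s3_def)
  have "\<delta> \<le> \<tau> t" if "s3 \<le> t" for t
    by (rule passes_strip_if_deriv_ge_on_strip[OF K_solution_tau_deriv[OF S] \<open>0 < c\<close>, of \<delta> s2])
       (use speed \<open>a \<le> s2\<close> \<open>- \<delta> \<le> \<tau> s2\<close> \<open>0 < \<delta>\<close> that s3_def in auto)
  then obtain s where "s3 \<le> s" "B < \<rho> s"
    using exceeds_bound_if_deriv_ge_pos[OF \<rho>', of "2 * \<delta>" s3 B] \<open>0 < \<delta>\<close> by auto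
  then show False using bounded[of s] \<open>a \<le> s2\<close> \<open>s2 \<le> s3\<close> by simp
qed

lemma K_solution_tau_nonneg_somewhere_after:
  assumes S: "K_solution h \<tau> \<mu>" and "h \<noteq> 0"
  shows "\<exists>s\<ge>a. 0 \<le> \<tau> s"
proof (rule ccontr)
  assume "\<not> ?thesis"
  hence "\<tau> s < 0" if "a \<le> s" for s using that by force
  hence "(\<tau> s)^2 + (\<mu> s)^2 \<le> (\<tau> a)^2 + (\<mu> a)^2" if "a \<le> s" for s
    using linear_upper_bound_of_deriv_le[OF K_solution_radius_sq_deriv[OF S] that, of 0] by force
  then show False
    using K_solution_radius_sq_unbounded[OF S \<open>h \<noteq> 0\<close>, of a "(\<tau> a)^2 + (\<mu> a)^2"] by force
qed

lemma K_solution_tau_sign_change: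
  assumes S: "K_solution h \<tau> \<mu>" and "h \<noteq> 0"
  obtains s0 where "\<tau> s0 = 0" "\<And>s. s < s0 \<Longrightarrow> \<tau> s < 0" "\<And>s. s0 < s \<Longrightarrow> 0 < \<tau> s"
proof -
  note S' = K_solution_reflect[OF S]
  obtain p where "0 \<le> p" "0 \<le> \<tau> p"
    using K_solution_tau_nonneg_somewhere_after[OF S \<open>h \<noteq> 0\<close>, of 0] by blast
  obtain q where "0 \<le> q" "\<tau> (- q) \<le> 0"
    using K_solution_tau_nonneg_somewhere_after[OF S' \<open>h \<noteq> 0\<close>, of 0] by auto
  have "isCont \<tau> x" for x using K_solution_tau_deriv[OF S] DERIV_isCont by blast
  then obtain s0 where "\<tau> s0 = 0"
    using IVT[of \<tau> "- q" 0 p] \<open>0 \<le> p\<close> \<open>0 \<le> q\<close> \<open>0 \<le> \<tau> p\<close> \<open>\<tau> (- q) \<le> 0\<close> by auto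
  moreover have "\<tau> s < 0" if "s < s0" for s
    using K_solution_tau_pos_after_zero[OF S' \<open>h \<noteq> 0\<close>, of "- s0" "- s"] \<open>\<tau> s0 = 0\<close> that by simp
  ultimately show ?thesis
    using that K_solution_tau_pos_after_zero[OF S \<open>h \<noteq> 0\<close>] by blast
qed

lemma K_solution_radius_sq_tendsto_at_top:
  assumes S: "K_solution h \<tau> \<mu>" and "h \<noteq> 0" and "\<tau> s0 = 0"
  shows "filterlim (\<lambda>t. (\<tau> t)^2 + (\<mu> t)^2) at_top at_top"
proof -
  define \<rho> where "\<rho> = (\<lambda>t. (\<tau> t)^2 + (\<mu> t)^2)"
  have "0 \<le> \<tau> t" if "s0 \<le> t" for t
    using K_solution_tau_pos_after_zero[OF S \<open>h \<noteq> 0\<close> \<open>\<tau> s0 = 0\<close>, of t] \<open>\<tau> s0 = 0\<close> that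
    by (cases "t = s0") auto
  hence mono: "\<rho> t \<le> \<rho> s" if "s0 \<le> t" "t \<le> s" for s t
    using linear_lower_bound_of_deriv_ge[OF K_solution_radius_sq_deriv[OF S] \<open>t \<le> s\<close>, of 0] that
    unfolding \<rho>_def by force
  show ?thesis unfolding filterlim_at_top eventually_at_top_linorder \<rho>_def[symmetric]
  proof
    fix Z
    obtain t where "s0 \<le> t" "Z < \<rho> t"
      using K_solution_radius_sq_unbounded[OF S \<open>h \<noteq> 0\<close>, of s0 Z] unfolding \<rho>_def by blast
    then show "\<exists>N. \<forall>s\<ge>N. Z \<le> \<rho> s" using mono by (meson less_imp_le order.trans)
  qed
qed

theorem claim3:
  fixes h :: real and \<tau> \<mu> :: "real \<Rightarrow> real"
  assumes hpos: "h > 0"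
    and tau_ode: "\<And>s. (\<tau> has_real_derivative (1 + Kfun h (\<tau> s) (\<mu> s) * \<mu> s)) (at s)"
    and mu_ode: "\<And>s. (\<mu> has_real_derivative (- Kfun h (\<tau> s) (\<mu> s) * \<tau> s)) (at s)"
  shows "\<exists>s0. \<tau> s0 = 0 \<and> (\<forall>s. \<tau> s = 0 \<longrightarrow> s = s0)
           \<and> (\<forall>s. s < s0 \<longrightarrow> \<tau> s < 0) \<and> (\<forall>s. s > s0 \<longrightarrow> \<tau> s > 0)
           \<and> (\<forall>s. (\<tau> s0)^2 + (\<mu> s0)^2 \<le> (\<tau> s)^2 + (\<mu> s)^2)
           \<and> (\<forall>s. ((\<lambda>t. (\<tau> t)^2 + (\<mu> t)^2) has_real_derivative 0) (at s) \<longleftrightarrow> s = s0)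
           \<and> filterlim (\<lambda>t. (\<tau> t)^2 + (\<mu> t)^2) at_top at_top
           \<and> filterlim (\<lambda>t. (\<tau> t)^2 + (\<mu> t)^2) at_top at_bot"
proof -
  have S: "K_solution h \<tau> \<mu>" and "h \<noteq> 0" using tau_ode mu_ode hpos by (auto simp: K_solution_def)
  obtain s0 where zero: "\<tau> s0 = 0" and neg: "\<And>s. s < s0 \<Longrightarrow> \<tau> s < 0" and pos: "\<And>s. s0 < s \<Longrightarrow> 0 < \<tau> s"
    using K_solution_tau_sign_change[OF S \<open>h \<noteq> 0\<close>] by blast
  have uniq: "\<tau> s = 0 \<Longrightarrow> s = s0" for s using neg pos by (metis less_irrefl neqE)
  note \<rho>' = K_solution_radius_sq_deriv[OF S]
  have "(\<tau> s0)^2 + (\<mu> s0)^2 \<le> (\<tau> s)^2 + (\<mu> s)^2" for s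
  proof (rule global_min_if_deriv_changes_sign[OF \<rho>'])
    show "2 * \<tau> x \<le> 0" if "x \<le> s0" for x using neg[of x] zero that by (cases "x = s0") auto
    show "0 \<le> 2 * \<tau> x" if "s0 \<le> x" for x using pos[of x] zero that by (cases "x = s0") auto
  qed
  moreover have "((\<lambda>t. (\<tau> t)^2 + (\<mu> t)^2) has_real_derivative 0) (at s) \<longleftrightarrow> s = s0" for s
  proof
    assume "((\<lambda>t. (\<tau> t)^2 + (\<mu> t)^2) has_real_derivative 0) (at s)"
    hence "2 * \<tau> s = 0" using DERIV_unique \<rho>' by blast
    then show "s = s0" using uniq by simp
  qed (use \<rho>'[of s0] zero in simp)
  moreover have "filterlim (\<lambda>t. (\<tau> t)^2 + (\<mu> t)^2) at_top at_bot"
  proof -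
    have "filterlim (\<lambda>t. (- \<tau> (- t))^2 + (- \<mu> (- t))^2) at_top at_top"
      using K_solution_radius_sq_tendsto_at_top[OF K_solution_reflect[OF S] \<open>h \<noteq> 0\<close>, of "- s0"] zero
      by simp
    then show ?thesis unfolding filterlim_at_bot_mirror by simp
  qed
  ultimately show ?thesis
    using zero uniq neg pos K_solution_radius_sq_tendsto_at_top[OF S \<open>h \<noteq> 0\<close> zero] by blast
qed

end
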